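(* Let $\mathcal{Z}\subseteq\mathbb{R}^d$ be a nonempty compact convex set, let $r:\mathcal{Z}\to\mathbb{R}$ be convex and differentiable on $\mathcal{Z}$, and let $\Theta\ge \max_{z\in\mathcal{Z}} r(z)-\min_{z\in\mathcal{Z}} r(z)$. Let $g:\mathcal{Z}\to\mathbb{R}^d$ and let $z^\star\in\mathcal{Z}$ satisfy $\langle g(z^\star), z^\star-z\rangle\le 0$ for all $z\in\mathcal{Z}$. Let $\nu>0$, $\alpha>0$, $\varepsilon\ge 0$ and $K\in\mathbb{N}$. Suppose $g$ is $\nu$-strongly monotone with respect to $r$, i.e. $\langle g(w)-g(z),w-z\rangle\ge \nu\langle \nabla r(w)-\nabla r(z),w-z\rangle$ for all $w,z\in\mathcal{Z}$. Let $z_0\in\operatorname{argmin}_{z\in\mathcal{Z}} r(z)$, and for $k=1,\dots,K$ let $z_{k-1/2},z_k\in\mathcal{Z}$ be any points satisfying, for all $w\in\mathcal{Z}$, $$\big\langle g(z_{k-1})+\alpha\big(\nabla r(z_{k-1/2})-\nabla r(z_{k-1})\big),\, z_{k-1/2}-w\big\rangle\le \tfrac{\varepsilon}{2},$$ $$\big\langle g(z_{k-1/2})+\alpha\big(\nabla r(z_{k})-\nabla r(z_{k-1})\big)+\nu\big(\nabla r(z_{k})-\nabla r(z_{k-1/2})\big),\, z_{k}-w\big\rangle\le \tfrac{\varepsilon}{2}.$$ Suppose moreover that for every $k\in[K]$ the relative Lipschitz condition $$\langle g(z_{k-1/2})-g(z_{k-1}),\,z_{k-1/2}-z_k\rangle\le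 \alpha\big(V_{z_{k-1/2}}(z_k)+V_{z_{k-1}}(z_{k-1/2})\big)$$ holds. Then $$V_{z_K}(z^\star)\le \Big(\frac{\alpha}{\nu+\alpha}\Big)^K\Theta+\frac{\varepsilon}{\nu}.$$
   Context: For a differentiable convex function $r$, its Bregman divergence is $V_{z'}(z):=V^r_{z'}(z)=r(z)-r(z')-\langle\nabla r(z'),z-z'\rangle\ge 0$. The two displayed conditions say that $z_{k-1/2}$ (resp. $z_k$) is an $\frac{\varepsilon}{2}$-approximate solution of $\min_{z\in\mathcal{Z}}\{\langle g(z_{k-1}),z\rangle+\alpha V_{z_{k-1}}(z)\}$ (resp. $\min_{z\in\mathcal{Z}}\{\langle g(z_{k-1/2}),z\rangle+\alpha V_{z_{k-1}}(z)+\nu V_{z_{k-1/2}}(z)\}$), where $z'$ is an $\varepsilon$-approximate solution of $\min_{\mathcal{Z}} F$ if $\langle\nabla F(z'),z'-w\rangle\le\varepsilon$ for all $w\in\mathcal{Z}$. *)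

theory Defs
  imports "HOL-Analysis.Analysis"
begin

text \<open>Bregman divergence of r (with gradient field Dr):
  V_{z'}(z) = r z - r z' - <Dr z', z - z'>.\<close>
definition bregman :: "('a::real_inner \<Rightarrow> real) \<Rightarrow> ('a \<Rightarrow> 'a) \<Rightarrow> 'a \<Rightarrow> 'a \<Rightarrow> real" where
  "bregman r Dr z' z = r z - r z' - inner (Dr z') (z - z')"

end

theory Submission
  imports Defs
begin

text \<open>Write \<open>V k\<close> for the Bregman distance from \<open>z k\<close> to \<open>z\<^sup>\<star>\<close>. One step of the scheme gives
  \<open>(\<alpha> + \<nu>) V k \<le> \<alpha> V (k - 1) + \<epsilon>\<close>: test the first step condition at \<open>w = z k\<close> and the second
  at \<open>w = z\<^sup>\<star>\<close>, add them, and turn every gradient term into Bregman divergences by the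
  three-point identity; the relative Lipschitz condition cancels the cross terms, and strong
  monotonicity together with the variational inequality at \<open>z\<^sup>\<star>\<close> leaves the extra \<open>\<nu> V k\<close>.
  Unrolling this recurrence from \<open>V 0 \<le> \<Theta>\<close>, which holds because the linear term of \<open>V 0\<close> is
  nonnegative by first-order optimality of the minimiser \<open>z 0\<close> of \<open>r\<close>, gives the bound.\<close>

lemma has_derivative_within_convex_segment_quotient:
  fixes f :: "'a::real_normed_vector \<Rightarrow> real"
  assumes f': "(f has_derivative f') (at x within S)" and "convex S" "x \<in> S" "y \<in> S"
  shows "((\<lambda>t. (f (x + t *\<^sub>R (y - x)) - f x) / t) \<longlongrightarrow> f' (y - x)) (at_right 0)"
proof -
  let ?p = "\<lambda>t::real. x + t *\<^sub>R (y - x)"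
  have p': "(?p has_derivative (\<lambda>t. t *\<^sub>R (y - x))) (at 0 within {0..1})"
    by (auto intro!: derivative_eq_intros)
  have "?p ` {0..1} \<subseteq> S"
  proof
    fix u assume "u \<in> ?p ` {0..1}"
    then obtain t where t: "t \<in> {0..1}" "u = (1 - t) *\<^sub>R x + t *\<^sub>R y"
      by (auto simp: algebra_simps)
    then show "u \<in> S" using assms(2-4) by (auto simp: convex_def)
  qed
  then have "(f has_derivative f') (at (?p 0) within ?p ` {0..1})"
    using has_derivative_subset[OF f'] by simp
  from diff_chain_within[OF p' this]
  have "((f \<circ> ?p) has_derivative f' \<circ> (\<lambda>t. t *\<^sub>R (y - x))) (at 0 within {0..1})" .
  moreover have "f' \<circ> (\<lambda>t. t *\<^sub>R (y - x)) = (\<lambda>t. f' (y - x) * t)"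
    using has_derivative_linear[OF f'] by (auto simp: linear_scale fun_eq_iff)
  ultimately have "((f \<circ> ?p) has_field_derivative f' (y - x)) (at 0 within {0..1})"
    by (simp add: has_field_derivative_def)
  then have "((\<lambda>t. ((f \<circ> ?p) t - (f \<circ> ?p) 0) / (t - 0)) \<longlongrightarrow> f' (y - x)) (at 0 within {0..1})"
    by (simp only: has_field_derivative_iff)
  then show ?thesis by (simp add: at_within_Icc_at_right)
qed

lemma convex_on_ge_tangent:
  fixes f :: "'a::real_normed_vector \<Rightarrow> real"
  assumes f': "(f has_derivative f') (at x within S)" and "convex S" "x \<in> S" "y \<in> S"
    and "convex_on S f"
  shows "f' (y - x) \<le> f y - f x"
proof (rule tendsto_upperbound[OF has_derivative_within_convex_segment_quotient[OF assms(1-4)]])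
  have "(f (x + t *\<^sub>R (y - x)) - f x) / t \<le> f y - f x" if t: "t \<in> {0<..<1}" for t
  proof -
    have "f ((1 - t) *\<^sub>R x + t *\<^sub>R y) \<le> (1 - t) * f x + t * f y"
      using assms(3-5) t by (intro convex_onD) auto
    then have "f (x + t *\<^sub>R (y - x)) - f x \<le> t * (f y - f x)"
      by (simp add: algebra_simps)
    then show ?thesis using t by (simp add: divide_simps mult.commute)
  qed
  then show "\<forall>\<^sub>F t in at_right 0. (f (x + t *\<^sub>R (y - x)) - f x) / t \<le> f y - f x"
    by (auto intro: eventually_at_right_real[of 0 1, THEN eventually_mono])
qed simp

lemma has_derivative_within_convex_min_nonneg:
  fixes f :: "'a::real_normed_vector \<Rightarrow> real"
  assumes f': "(f has_derivative f') (at x within S)" and "convex S" "x \<in> S" "y \<in> S"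
    and min: "\<And>w. w \<in> S \<Longrightarrow> f x \<le> f w"
  shows "0 \<le> f' (y - x)"
proof (rule tendsto_lowerbound[OF has_derivative_within_convex_segment_quotient[OF assms(1-4)]])
  have "0 \<le> (f (x + t *\<^sub>R (y - x)) - f x) / t" if t: "t \<in> {0<..<1}" for t
  proof -
    have "x + t *\<^sub>R (y - x) = (1 - t) *\<^sub>R x + t *\<^sub>R y" by (simp add: algebra_simps)
    then have "x + t *\<^sub>R (y - x) \<in> S" using assms(2-4) t by (auto simp: convex_def)
    then show ?thesis using min t by simp
  qed
  then show "\<forall>\<^sub>F t in at_right 0. 0 \<le> (f (x + t *\<^sub>R (y - x)) - f x) / t"
    by (auto intro: eventually_at_right_real[of 0 1, THEN eventually_mono])
qed simp

lemma bregman_nonneg: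
  assumes "convex_on S r" "convex S" "x \<in> S" "y \<in> S"
    and "(r has_derivative (\<lambda>h. inner (Dr x) h)) (at x within S)"
  shows "0 \<le> bregman r Dr x y"
  using convex_on_ge_tangent[OF assms(5,2-4,1)] by (simp add: bregman_def)

lemma bregman_argmin_le_range:
  fixes r :: "'a::real_inner \<Rightarrow> real"
  assumes "compact S" "convex S" "continuous_on S r" "x \<in> S" "y \<in> S"
    and r': "(r has_derivative (\<lambda>h. inner (Dr x) h)) (at x within S)"
    and min: "\<And>w. w \<in> S \<Longrightarrow> r x \<le> r w"
  shows "bregman r Dr x y \<le> Sup (r ` S) - Inf (r ` S)"
proof -
  have "bounded (r ` S)"
    using assms(1,3) by (intro compact_imp_bounded compact_continuous_image)
  then have "r y \<le> Sup (r ` S)" "Inf (r ` S) \<le> r x"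
    using assms(4,5) by (auto intro: cSup_upper cInf_lower bounded_imp_bdd_above bounded_imp_bdd_below)
  moreover have "0 \<le> inner (Dr x) (y - x)"
    using has_derivative_within_convex_min_nonneg[OF r' assms(2,4,5) min] by simp
  ultimately show ?thesis by (simp add: bregman_def)
qed

lemma bregman_three_point:
  "inner (Dr b - Dr a) (b - w) = bregman r Dr a b + bregman r Dr b w - bregman r Dr a w"
  by (simp add: bregman_def inner_diff_left inner_diff_right)

lemma bregman_symmetrized:
  "inner (Dr a - Dr b) (a - b) = bregman r Dr b a + bregman r Dr a b"
  by (simp add: bregman_def inner_diff_left inner_diff_right algebra_simps)

text \<open>The points \<open>a, h, b, s\<close> play the roles of \<open>z (k - 1)\<close>, \<open>zh k\<close>, \<open>z k\<close> and \<open>z\<^sup>\<star>\<close>.\<close>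

lemma mirror_prox_step_contraction:
  fixes a h b s :: "'a::real_inner"
  assumes step1: "inner (g a + \<alpha> *\<^sub>R (Dr h - Dr a)) (h - b) \<le> \<epsilon> / 2"
    and step2: "inner (g h + \<alpha> *\<^sub>R (Dr b - Dr a) + \<nu> *\<^sub>R (Dr b - Dr h)) (b - s) \<le> \<epsilon> / 2"
    and rel_lip: "inner (g h - g a) (h - b) \<le> \<alpha> * (bregman r Dr h b + bregman r Dr a h)"
    and strong_mono: "\<nu> * inner (Dr h - Dr s) (h - s) \<le> inner (g h - g s) (h - s)"
    and sol: "inner (g s) (s - h) \<le> 0"
    and "0 \<le> bregman r Dr h b" "0 \<le> bregman r Dr s h" "0 \<le> \<nu>"
  shows "(\<alpha> + \<nu>) * bregman r Dr b s \<le> \<alpha> * bregman r Dr a s + \<epsilon>"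
proof -
  have "inner (g a) (h - b) + \<alpha> * (bregman r Dr a h + bregman r Dr h b - bregman r Dr a b)
      \<le> \<epsilon> / 2"
    using step1 bregman_three_point[of Dr h a b r] by (simp add: inner_add_left)
  moreover have "inner (g h) (b - s) + \<alpha> * (bregman r Dr a b + bregman r Dr b s - bregman r Dr a s)
      + \<nu> * (bregman r Dr h b + bregman r Dr b s - bregman r Dr h s) \<le> \<epsilon> / 2"
    using step2 bregman_three_point[of Dr b a s r] bregman_three_point[of Dr b h s r]
    by (simp add: inner_add_left)
  moreover have "inner (g h) (b - s) + inner (g a) (h - b)
      = inner (g h - g s) (h - s) - inner (g s) (s - h) - inner (g h - g a) (h - b)"
    by (simp add: inner_diff_left inner_diff_right)
  moreover have "\<nu> * (bregman r Dr s h + bregman r Dr h s) \<le> inner (g h - g s) (h - s)"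
    using strong_mono bregman_symmetrized[of Dr h s r] by simp
  moreover have "0 \<le> \<nu> * bregman r Dr h b" "0 \<le> \<nu> * bregman r Dr s h"
    using assms(6-8) by auto
  ultimately show ?thesis
    using rel_lip sol by (simp add: algebra_simps)
qed

lemma linear_recurrence_bound:
  fixes V :: "nat \<Rightarrow> real"
  assumes "0 < \<nu>" "0 < \<alpha>" "0 \<le> \<epsilon>" "V 0 \<le> \<Theta>"
    and step: "\<And>k. k \<in> {1..K} \<Longrightarrow> (\<alpha> + \<nu>) * V k \<le> \<alpha> * V (k - 1) + \<epsilon>"
  shows "V K \<le> (\<alpha> / (\<nu> + \<alpha>)) ^ K * \<Theta> + \<epsilon> / \<nu>"
proof -
  let ?q = "\<alpha> / (\<nu> + \<alpha>)"
  have "k \<le> K \<Longrightarrow> V k \<le> ?q ^ k * \<Theta> + \<epsilon> / \<nu>" for k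
  proof (induction k)
    case 0
    then show ?case using assms(1-4) by (simp add: add_increasing2)
  next
    case (Suc k)
    then have "\<alpha> * V k \<le> \<alpha> * (?q ^ k * \<Theta> + \<epsilon> / \<nu>)"
      using assms(2) by (intro mult_left_mono) auto
    moreover have "(\<alpha> + \<nu>) * V (Suc k) \<le> \<alpha> * V k + \<epsilon>"
      using step[of "Suc k"] Suc.prems by simp
    ultimately have "(\<alpha> + \<nu>) * V (Suc k) \<le> \<alpha> * (?q ^ k * \<Theta> + \<epsilon> / \<nu>) + \<epsilon>"
      by linarith
    also have "\<dots> = (\<alpha> + \<nu>) * (?q ^ Suc k * \<Theta> + \<epsilon> / \<nu>)"
    proof -
      have q: "(\<alpha> + \<nu>) * ?q = \<alpha>" and e: "(\<alpha> + \<nu>) * (\<epsilon> / \<nu>) = \<alpha> * (\<epsilon> / \<nu>) + \<epsilon>"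
        using assms(1,2) by (simp_all add: field_simps)
      have "(\<alpha> + \<nu>) * (?q ^ Suc k * \<Theta> + \<epsilon> / \<nu>)
          = ((\<alpha> + \<nu>) * ?q) * (?q ^ k * \<Theta>) + (\<alpha> + \<nu>) * (\<epsilon> / \<nu>)"
        by (simp only: distrib_left power_Suc mult.assoc)
      then show ?thesis unfolding q e by (simp add: distrib_left)
    qed
    finally show ?case using assms(1,2) by (simp add: mult_le_cancel_left_pos)
  qed
  then show ?thesis by simp
qed

theorem mainTheorem1:
  fixes Z :: "(real ^ 'd) set"
    and r :: "real ^ 'd \<Rightarrow> real"
    and Dr :: "real ^ 'd \<Rightarrow> real ^ 'd"
    and g :: "real ^ 'd \<Rightarrow> real ^ 'd"
    and zstar :: "real ^ 'd"
    and zh z :: "nat \<Rightarrow> real ^ 'd"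
    and \<Theta> \<nu> \<alpha> \<epsilon> :: real
    and K :: nat
  assumes Z: "Z \<noteq> {}" "compact Z" "convex Z"
    and r_convex: "convex_on Z r"
    and r_diff: "\<And>x. x \<in> Z \<Longrightarrow> (r has_derivative (\<lambda>h. inner (Dr x) h)) (at x within Z)"
    and Theta: "\<Theta> \<ge> Sup (r ` Z) - Inf (r ` Z)"
    and zstar: "zstar \<in> Z" "\<And>w. w \<in> Z \<Longrightarrow> inner (g zstar) (zstar - w) \<le> 0"
    and params: "\<nu> > 0" "\<alpha> > 0" "\<epsilon> \<ge> 0"
    and strong_mono: "\<And>w x. w \<in> Z \<Longrightarrow> x \<in> Z \<Longrightarrow>
        inner (g w - g x) (w - x) \<ge> \<nu> * inner (Dr w - Dr x) (w - x)"
    and z0: "z 0 \<in> Z" "\<And>w. w \<in> Z \<Longrightarrow> r (z 0) \<le> r w"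
    and iter_in: "\<And>k. k \<in> {1..K} \<Longrightarrow> zh k \<in> Z \<and> z k \<in> Z"
    and step1: "\<And>k w. k \<in> {1..K} \<Longrightarrow> w \<in> Z \<Longrightarrow>
        inner (g (z (k - 1)) + \<alpha> *\<^sub>R (Dr (zh k) - Dr (z (k - 1)))) (zh k - w) \<le> \<epsilon> / 2"
    and step2: "\<And>k w. k \<in> {1..K} \<Longrightarrow> w \<in> Z \<Longrightarrow>
        inner (g (zh k) + \<alpha> *\<^sub>R (Dr (z k) - Dr (z (k - 1))) + \<nu> *\<^sub>R (Dr (z k) - Dr (zh k)))
              (z k - w) \<le> \<epsilon> / 2"
    and rel_lip: "\<And>k. k \<in> {1..K} \<Longrightarrow>
        inner (g (zh k) - g (z (k - 1))) (zh k - z k)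
          \<le> \<alpha> * (bregman r Dr (zh k) (z k) + bregman r Dr (z (k - 1)) (zh k))"
  shows "bregman r Dr (z K) zstar \<le> (\<alpha> / (\<nu> + \<alpha>)) ^ K * \<Theta> + \<epsilon> / \<nu>"
proof (rule linear_recurrence_bound[where V = "\<lambda>k. bregman r Dr (z k) zstar", OF params])
  have "continuous_on Z r"
    using has_derivative_continuous[OF r_diff] by (auto simp: continuous_on_eq_continuous_within)
  from bregman_argmin_le_range[where Dr = Dr, OF Z(2,3) this z0(1) zstar(1) r_diff[OF z0(1)] z0(2)]
  show "bregman r Dr (z 0) zstar \<le> \<Theta>"
    using Theta by linarith
next
  fix k assume k: "k \<in> {1..K}"
  then have h: "zh k \<in> Z" and b: "z k \<in> Z" using iter_in by auto
  show "(\<alpha> + \<nu>) * bregman r Dr (z k) zstar \<le> \<alpha> * bregman r Dr (z (k - 1)) zstar + \<epsilon>"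
    using params(1)
    by (intro mirror_prox_step_contraction[OF step1[OF k b] step2[OF k zstar(1)] rel_lip[OF k]
          strong_mono[OF h zstar(1)] zstar(2)[OF h]]
        bregman_nonneg[OF r_convex Z(3) _ _ r_diff] h b zstar(1)) auto
qed

end
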